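(* Let $\ell,D>0$, let $\mathcal A$ be a first-order $p$-SCLI and let $x^{(t)}$ denote its iterates when run with the operator $\nabla f$. Then there are constants $c_{\mathcal A},T_{\mathcal A}>0$ such that for every $T\ge T_{\mathcal A}$ there exist $f\in\mathcal F^{\mathrm{quad}}_{n,\ell,D}$, initial points $x^{(0)},\dots,x^{(-p+1)}$ of Euclidean norm at most $D$, and some $T'\in\{T,T+1,\dots,T+p-1\}$ such that $f(x^{(T')})-f(x^* )\ge\frac{c_{\mathcal A}\ell D^2}{T}$, where $x^*$ is the minimizer of $f$.
   Context: A first-order $p$-SCLI is specified by fixed real scalars $\alpha_0,\dots,\alpha_{p-1},\beta_0,\dots,\beta_{p-1}$: given $F:\mathbb R^n\to\mathbb R^n$ (here $F=\nabla f$) and initial points $x^{(0)},\dots,x^{(-p+1)}$, it generates $x^{(t)}=\sum_{j=0}^{p-1}\big(\alpha_jF(x^{(t-p+j)})+\beta_jx^{(t-p+j)}\big)$ for $t\ge1$. $\mathcal F^{\mathrm{quad}}_{n,\ell,D}$ is the class of functions $f(x)=\frac12x^\top Sx+b^\top x$ on $\mathbb R^n$ with $S$ symmetric positive definite, $\nabla f$ $\ell$-Lipschitz, and $x^*:=-S^{-1}b$ satisfying $\|x^*\|\le D$. *)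

theory Defs
  imports "HOL-Analysis.Analysis"
begin

text \<open>The state at step t is the window of the last p iterates:
  scli_window p alpha beta F init t j = x^(t - p + 1 + j) for j < p,
  where the initial points are given by init k = x^(-k) for k < p.\<close>
primrec scli_window ::
  "nat \<Rightarrow> (nat \<Rightarrow> real) \<Rightarrow> (nat \<Rightarrow> real) \<Rightarrow> ('a::real_vector \<Rightarrow> 'a)
    \<Rightarrow> (nat \<Rightarrow> 'a) \<Rightarrow> nat \<Rightarrow> nat \<Rightarrow> 'a" where
  "scli_window p alpha beta F init 0 = (\<lambda>j. init (p - 1 - j))"
| "scli_window p alpha beta F init (Suc t) =
     (\<lambda>j. if j < p - 1 then scli_window p alpha beta F init t (j + 1)
          else (\<Sum>i<p. alpha i *\<^sub>R F (scli_window p alpha beta F init t i)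
                        + beta i *\<^sub>R scli_window p alpha beta F init t i))"

definition scli_iter ::
  "nat \<Rightarrow> (nat \<Rightarrow> real) \<Rightarrow> (nat \<Rightarrow> real) \<Rightarrow> ('a::real_vector \<Rightarrow> 'a)
    \<Rightarrow> (nat \<Rightarrow> 'a) \<Rightarrow> nat \<Rightarrow> 'a" where
  "scli_iter p alpha beta F init t = scli_window p alpha beta F init t (p - 1)"

definition quad_fun :: "real^'n^'n \<Rightarrow> real^'n \<Rightarrow> real^'n \<Rightarrow> real" where
  "quad_fun S b x = (1/2) * (x \<bullet> (S *v x)) + b \<bullet> x"

definition quad_grad :: "real^'n^'n \<Rightarrow> real^'n \<Rightarrow> real^'n \<Rightarrow> real^'n" where
  "quad_grad S b x = S *v x + b"

definition quad_min :: "real^'n^'n \<Rightarrow> real^'n \<Rightarrow> real^'n" where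
  "quad_min S b = - (matrix_inv S *v b)"

definition in_Fquad :: "real \<Rightarrow> real \<Rightarrow> real^'n^'n \<Rightarrow> real^'n \<Rightarrow> bool" where
  "in_Fquad l D S b \<longleftrightarrow>
     transpose S = S \<and> (\<forall>x. x \<noteq> 0 \<longrightarrow> x \<bullet> (S *v x) > 0) \<and>
     l-lipschitz_on UNIV (quad_grad S b) \<and> norm (quad_min S b) \<le> D"

end

theory Submission
  imports Defs "HOL-Computational_Algebra.Fundamental_Theorem_Algebra"
begin

text \<open>
  If \<open>\<Sum>i<p. \<beta> i \<noteq> 1\<close>, some quadratic with Hessian \<open>l I\<close> has a fixed point of the iteration that
  is not its minimiser; started there the method never moves, so the error stays a positive
  constant. If \<open>\<Sum>i<p. \<beta> i = 1\<close>, then \<open>1\<close> is a root of the characteristic polynomial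
  \<open>z\<^sup>p - (\<Sum>i<p. (\<lambda> \<alpha> i + \<beta> i) z\<^sup>i)\<close> of the method applied to \<open>\<lambda>/2 |x|\<^sup>2\<close> at \<open>\<lambda> = 0\<close>.
  Vieta's formulas for the reciprocals \<open>y = 1 / (z - 1)\<close> show that for small \<open>\<lambda>\<close> some root
  still satisfies \<open>|z|\<^sup>2 \<ge> 1 - K \<lambda>\<close>. Taking \<open>\<lambda>\<close> proportional to \<open>1/T\<close> and initial points on
  the real part of the mode \<open>z\<^sup>t\<close>, the \<open>T\<close>-th iterate still has norm of order \<open>D\<close>, so the
  error is of order \<open>\<lambda> D\<^sup>2\<close>, i.e. \<open>l D\<^sup>2 / T\<close>.
\<close>

section \<open>Polynomials with prescribed roots\<close>

definition poly_of_roots :: "'a::comm_ring_1 list \<Rightarrow> 'a poly" where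
  "poly_of_roots ys = (\<Prod>y\<leftarrow>ys. [:-y, 1:])"

lemma poly_of_roots_Nil [simp]: "poly_of_roots [] = 1"
  by (simp add: poly_of_roots_def)

lemma poly_of_roots_Cons: "poly_of_roots (y # ys) = [:-y, 1:] * poly_of_roots ys"
  by (simp add: poly_of_roots_def)

lemma poly_poly_of_roots_eq_0: "y \<in> set ys \<Longrightarrow> poly (poly_of_roots ys) y = 0"
  by (induction ys) (auto simp: poly_of_roots_Cons)

lemma complex_poly_factor_roots:
  fixes R :: "complex poly"
  obtains ys where "length ys = degree R" "R = smult (lead_coeff R) (poly_of_roots ys)"
proof -
  obtain ys where ys: "mset ys = proots R"
    using ex_mset by blast
  have "R = smult (lead_coeff R) (\<Prod>x\<in>#proots R. [:-x, 1:])"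
    by (rule complex_poly_decompose_multiset [symmetric])
  also have "(\<Prod>x\<in>#proots R. [:-x, 1:]) = poly_of_roots ys"
    by (simp add: poly_of_roots_def prod_mset_prod_list [symmetric] ys [symmetric])
  finally show ?thesis
    using that size_proots_complex[of R] ys by (metis size_mset)
qed

lemma coeff_linear_factor_mult:
  fixes y :: "'a::comm_ring_1"
  shows "coeff ([:-y, 1:] * q) k = (case k of 0 \<Rightarrow> 0 | Suc k' \<Rightarrow> coeff q k') - y * coeff q k"
  by (cases k) (simp_all add: coeff_pCons algebra_simps)

lemma coeff_poly_of_roots_eq_0: "length ys < k \<Longrightarrow> coeff (poly_of_roots ys) k = 0"
  by (induction ys arbitrary: k)
     (auto simp: coeff_pCons poly_of_roots_Cons coeff_linear_factor_mult split: nat.split)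

lemma coeff_poly_of_roots_length [simp]: "coeff (poly_of_roots ys) (length ys) = 1"
  by (induction ys) (auto simp: poly_of_roots_Cons coeff_linear_factor_mult coeff_poly_of_roots_eq_0)

lemma coeff_poly_of_roots_sum:
  assumes "ys \<noteq> []"
  shows "coeff (poly_of_roots ys) (length ys - 1) = - sum_list ys"
proof -
  have "coeff (poly_of_roots (y # ys)) (length ys) = - sum_list (y # ys)" for y ys
  proof (induction ys arbitrary: y)
    case (Cons w ws)
    then show ?case
      using coeff_poly_of_roots_length[of "w # ws"]
      by (simp add: poly_of_roots_Cons coeff_linear_factor_mult coeff_poly_of_roots_eq_0 algebra_simps)
  qed (simp add: poly_of_roots_Cons)
  then show ?thesis
    using assms by (cases ys) auto
qed

lemma coeff_poly_of_roots_sum_squares: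
  assumes "2 \<le> length ys"
  shows "2 * coeff (poly_of_roots ys) (length ys - 2) = (sum_list ys)\<^sup>2 - (\<Sum>y\<leftarrow>ys. y\<^sup>2)"
proof -
  have "2 * coeff (poly_of_roots (y # z # ys)) (length ys)
      = (sum_list (y # z # ys))\<^sup>2 - (\<Sum>x\<leftarrow>y # z # ys. x\<^sup>2)" for y z ys
  proof (induction ys arbitrary: y z)
    case Nil
    then show ?case
      by (simp add: poly_of_roots_Cons power2_eq_square algebra_simps)
  next
    case (Cons w ws)
    have "2 * coeff (poly_of_roots (y # z # w # ws)) (length (w # ws))
        = 2 * coeff (poly_of_roots (z # w # ws)) (length ws)
          - 2 * y * coeff (poly_of_roots (z # w # ws)) (Suc (length ws))"
      by (simp only: poly_of_roots_Cons[of y "z # w # ws"] coeff_linear_factor_mult length_Cons nat.case)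
         (simp add: algebra_simps)
    moreover have "coeff (poly_of_roots (z # w # ws)) (Suc (length ws)) = - (z + w + sum_list ws)"
      using coeff_poly_of_roots_sum[of "z # w # ws"] by (simp add: algebra_simps)
    ultimately show ?case
      using Cons[of z w] by (simp add: power2_eq_square algebra_simps)
  qed
  then show ?thesis
    using assms by (cases ys rule: remdups_adj.cases) auto
qed

lemma norm_coeff_poly_of_roots_le:
  fixes ys :: "'a::{comm_ring_1,real_normed_algebra_1} list"
  assumes "\<And>y. y \<in> set ys \<Longrightarrow> norm y \<le> W"
  shows "norm (coeff (poly_of_roots ys) k) \<le> (1 + W) ^ length ys"
  using assms
proof (induction ys arbitrary: k)
  case Nil
  then show ?case
    by simp
next
  case (Cons y ys)
  have W: "0 \<le> W"
    by (meson Cons.prems list.set_intros(1) norm_ge_zero order_trans)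
  have "norm (coeff (poly_of_roots (y # ys)) k)
      \<le> norm (case k of 0 \<Rightarrow> 0 | Suc k' \<Rightarrow> coeff (poly_of_roots ys) k') + norm (y * coeff (poly_of_roots ys) k)"
    unfolding poly_of_roots_Cons coeff_linear_factor_mult by (rule norm_triangle_ineq4)
  also have "\<dots> \<le> (1 + W) ^ length ys + W * (1 + W) ^ length ys"
  proof (rule add_mono)
    show "norm (case k of 0 \<Rightarrow> 0 | Suc k' \<Rightarrow> coeff (poly_of_roots ys) k') \<le> (1 + W) ^ length ys"
      using Cons W by (auto split: nat.split)
    have "norm (y * coeff (poly_of_roots ys) k) \<le> norm y * norm (coeff (poly_of_roots ys) k)"
      by (rule norm_mult_ineq)
    also have "\<dots> \<le> W * (1 + W) ^ length ys"
      using Cons W by (intro mult_mono) auto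
    finally show "norm (y * coeff (poly_of_roots ys) k) \<le> W * (1 + W) ^ length ys" .
  qed
  finally show ?case
    by (simp add: algebra_simps)
qed

section \<open>Coefficient estimates from Vieta's formulas\<close>

lemma norm_sum_list_le: "norm (\<Sum>x\<leftarrow>xs. f x) \<le> (\<Sum>x\<leftarrow>xs. norm (f x))"
  by (induction xs) (auto intro: order_trans[OF norm_triangle_ineq])

lemma Re_sum_list: "Re (\<Sum>x\<leftarrow>xs. f x) = (\<Sum>x\<leftarrow>xs. Re (f x))"
  by (induction xs) auto

lemma sum_list_le_length_mult:
  fixes f :: "'a \<Rightarrow> real"
  assumes "\<And>x. x \<in> set xs \<Longrightarrow> f x \<le> W"
  shows "(\<Sum>x\<leftarrow>xs. f x) \<le> real (length xs) * W"
  using sum_list_mono[of xs f "\<lambda>_. W"] assms by (simp add: sum_list_triv)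

text \<open>For \<open>d 0 \<noteq> 0\<close>, \<^term>\<open>roots_of_reversed p d ys\<close> says that \<open>ys\<close> lists, with multiplicity,
  the roots of \<open>\<Sum>k\<le>p. d k * y ^ (p - k)\<close>.\<close>

definition roots_of_reversed :: "nat \<Rightarrow> (nat \<Rightarrow> real) \<Rightarrow> complex list \<Rightarrow> bool" where
  "roots_of_reversed p d ys \<longleftrightarrow> length ys = p \<and>
     (\<forall>k\<le>p. complex_of_real (d 0) * coeff (poly_of_roots ys) (p - k) = complex_of_real (d k))"

lemma roots_of_reversed_norm_coeff:
  assumes "roots_of_reversed p d ys" "k \<le> p"
  shows "cmod (coeff (poly_of_roots ys) (p - k)) * \<bar>d 0\<bar> = \<bar>d k\<bar>"
proof -
  have "complex_of_real (d 0) * coeff (poly_of_roots ys) (p - k) = complex_of_real (d k)"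
    using assms unfolding roots_of_reversed_def by blast
  then have "cmod (complex_of_real (d 0) * coeff (poly_of_roots ys) (p - k)) = \<bar>d k\<bar>"
    by simp
  then show ?thesis
    by (simp add: norm_mult mult.commute)
qed

lemma norm_sq_le_of_sum_bounds:
  fixes ys :: "complex list"
  assumes left: "\<And>x. x \<in> set ys \<Longrightarrow> Re x \<le> 0"
    and sum: "cmod (sum_list ys) \<le> B" and sum_squares: "cmod (\<Sum>x\<leftarrow>ys. x\<^sup>2) \<le> G"
    and y: "y \<in> set ys"
  shows "(cmod y)\<^sup>2 \<le> (1 + real (length ys)) * B\<^sup>2 + G"
proof -
  have "(\<Sum>x\<leftarrow>ys. - Re x) = - Re (sum_list ys)"
    by (induction ys) auto
  also have "\<dots> \<le> B"
    using sum abs_Re_le_cmod[of "sum_list ys"] by linarith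
  finally have sum_Re: "(\<Sum>x\<leftarrow>ys. - Re x) \<le> B" .
  have Re_sq: "(Re x)\<^sup>2 \<le> B\<^sup>2" if "x \<in> set ys" for x
  proof -
    have "- Re x \<le> (\<Sum>x\<leftarrow>ys. - Re x)"
      using that left by (intro member_le_sum_list) auto
    then have "\<bar>Re x\<bar> \<le> B"
      using sum_Re left[OF that] by linarith
    then show ?thesis
      by (metis abs_ge_zero power2_abs power_mono)
  qed
  have "(\<Sum>x\<leftarrow>ys. (Im x)\<^sup>2) = (\<Sum>x\<leftarrow>ys. (Re x)\<^sup>2 - Re (x\<^sup>2))"
    by (intro arg_cong[where f = sum_list] map_cong) (auto simp: power2_eq_square)
  also have "\<dots> = (\<Sum>x\<leftarrow>ys. (Re x)\<^sup>2) - Re (\<Sum>x\<leftarrow>ys. x\<^sup>2)"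
    by (simp add: sum_list_subtractf Re_sum_list)
  also have "\<dots> \<le> real (length ys) * B\<^sup>2 + G"
    using sum_list_le_length_mult[of ys "\<lambda>x. (Re x)\<^sup>2" "B\<^sup>2"] Re_sq sum_squares
      abs_Re_le_cmod[of "\<Sum>x\<leftarrow>ys. x\<^sup>2"] by force
  finally have "(Im y)\<^sup>2 \<le> real (length ys) * B\<^sup>2 + G"
    using member_le_sum_list[of "(Im y)\<^sup>2" "map (\<lambda>x. (Im x)\<^sup>2) ys"] y by force
  then show ?thesis
    using Re_sq[OF y] by (simp add: cmod_power2 algebra_simps)
qed

lemma roots_of_reversed_norm_sum:
  assumes ys: "roots_of_reversed p d ys" and "p \<ge> 1"
  shows "cmod (sum_list ys) * \<bar>d 0\<bar> = \<bar>d 1\<bar>"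
proof -
  have "length ys = p" "ys \<noteq> []"
    using assms by (auto simp: roots_of_reversed_def)
  then have "coeff (poly_of_roots ys) (p - 1) = - sum_list ys"
    using coeff_poly_of_roots_sum by metis
  then show ?thesis
    using roots_of_reversed_norm_coeff[OF ys, of 1] assms(2) by simp
qed

lemma roots_of_reversed_norm_sum_squares:
  assumes ys: "roots_of_reversed p d ys" and "p \<ge> 2"
  shows "cmod ((sum_list ys)\<^sup>2 - (\<Sum>y\<leftarrow>ys. y\<^sup>2)) * \<bar>d 0\<bar> = 2 * \<bar>d 2\<bar>"
proof -
  have "length ys = p"
    using ys by (simp add: roots_of_reversed_def)
  then have "(sum_list ys)\<^sup>2 - (\<Sum>y\<leftarrow>ys. y\<^sup>2) = 2 * coeff (poly_of_roots ys) (p - 2)"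
    using coeff_poly_of_roots_sum_squares[of ys] assms(2) by simp
  then show ?thesis
    using roots_of_reversed_norm_coeff[OF ys, of 2] assms(2) by (simp add: norm_mult mult.assoc)
qed

lemma roots_of_reversed_first_coeff_le:
  assumes ys: "roots_of_reversed p d ys" and "p \<ge> 1" and bounded: "\<And>y. y \<in> set ys \<Longrightarrow> cmod y \<le> R"
  shows "\<bar>d 1\<bar> \<le> p * R * \<bar>d 0\<bar>"
proof -
  have "cmod (sum_list ys) \<le> p * R"
    using norm_sum_list_le[of "\<lambda>y. y" ys] sum_list_le_length_mult[of ys cmod R] bounded ys
    by (force simp: roots_of_reversed_def)
  then have "cmod (sum_list ys) * \<bar>d 0\<bar> \<le> p * R * \<bar>d 0\<bar>"
    by (rule mult_right_mono) simp
  then show ?thesis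
    using roots_of_reversed_norm_sum[OF ys assms(2)] by simp
qed

lemma roots_of_reversed_second_coeff_le:
  assumes ys: "roots_of_reversed p d ys" and "p \<ge> 2" "d 0 \<noteq> 0" "s > 0"
    and left: "\<And>y. y \<in> set ys \<Longrightarrow> s * (cmod y)\<^sup>2 \<le> - 2 * Re y"
  defines "B \<equiv> \<bar>d 1\<bar> / \<bar>d 0\<bar>"
  shows "2 * \<bar>d 2\<bar> \<le> (B\<^sup>2 + 2 * B / s) * \<bar>d 0\<bar>"
proof -
  have S: "cmod (sum_list ys) = B"
    using roots_of_reversed_norm_sum[OF ys] assms(2,3) by (simp add: B_def field_simps)
  have "s * (\<Sum>y\<leftarrow>ys. (cmod y)\<^sup>2) = (\<Sum>y\<leftarrow>ys. s * (cmod y)\<^sup>2)"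
    by (simp add: sum_list_const_mult)
  also have "\<dots> \<le> (\<Sum>y\<leftarrow>ys. - 2 * Re y)"
    using left by (intro sum_list_mono) auto
  also have "\<dots> = - 2 * Re (sum_list ys)"
    by (induction ys) auto
  also have "\<dots> \<le> 2 * B"
    using S abs_Re_le_cmod[of "sum_list ys"] by linarith
  finally have "(\<Sum>y\<leftarrow>ys. (cmod y)\<^sup>2) \<le> 2 * B / s"
    using assms(4) by (simp add: field_simps)
  then have "cmod ((sum_list ys)\<^sup>2 - (\<Sum>y\<leftarrow>ys. y\<^sup>2)) \<le> B\<^sup>2 + 2 * B / s"
    using norm_triangle_ineq4[of "(sum_list ys)\<^sup>2" "\<Sum>y\<leftarrow>ys. y\<^sup>2"] norm_sum_list_le[of "\<lambda>y. y\<^sup>2" ys] S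
    by (simp add: norm_power)
  then have "cmod ((sum_list ys)\<^sup>2 - (\<Sum>y\<leftarrow>ys. y\<^sup>2)) * \<bar>d 0\<bar> \<le> (B\<^sup>2 + 2 * B / s) * \<bar>d 0\<bar>"
    by (rule mult_right_mono) simp
  then show ?thesis
    using roots_of_reversed_norm_sum_squares[OF ys assms(2)] by simp
qed

lemma roots_of_reversed_coeff_le:
  assumes ys: "roots_of_reversed p d ys" and "p \<ge> 2" "d 0 \<noteq> 0" "k \<le> p"
    and left: "\<And>y. y \<in> set ys \<Longrightarrow> Re y \<le> 0"
  defines "B \<equiv> \<bar>d 1\<bar> / \<bar>d 0\<bar>"
  defines "W \<equiv> sqrt ((2 + real p) * B\<^sup>2 + 2 * \<bar>d 2\<bar> / \<bar>d 0\<bar>)"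
  shows "\<bar>d k\<bar> \<le> (1 + W) ^ p * \<bar>d 0\<bar>"
proof -
  have len: "length ys = p"
    using ys by (simp add: roots_of_reversed_def)
  have S: "cmod (sum_list ys) = B"
    using roots_of_reversed_norm_sum[OF ys] assms(2,3) by (simp add: B_def field_simps)
  have "cmod (\<Sum>y\<leftarrow>ys. y\<^sup>2)
      \<le> cmod ((sum_list ys)\<^sup>2) + cmod ((sum_list ys)\<^sup>2 - (\<Sum>y\<leftarrow>ys. y\<^sup>2))"
    using norm_triangle_ineq4[of "(sum_list ys)\<^sup>2" "(sum_list ys)\<^sup>2 - (\<Sum>y\<leftarrow>ys. y\<^sup>2)"] by simp
  also have "\<dots> = B\<^sup>2 + 2 * \<bar>d 2\<bar> / \<bar>d 0\<bar>"
    using S roots_of_reversed_norm_sum_squares[OF ys assms(2)] assms(3)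
    by (simp add: norm_power field_simps)
  finally have sum_squares: "cmod (\<Sum>y\<leftarrow>ys. y\<^sup>2) \<le> B\<^sup>2 + 2 * \<bar>d 2\<bar> / \<bar>d 0\<bar>" .
  have "cmod y \<le> W" if "y \<in> set ys" for y
  proof -
    have "(cmod y)\<^sup>2 \<le> (1 + real (length ys)) * B\<^sup>2 + (B\<^sup>2 + 2 * \<bar>d 2\<bar> / \<bar>d 0\<bar>)"
      by (rule norm_sq_le_of_sum_bounds[OF left S[THEN eq_refl] sum_squares that])
    then show ?thesis
      unfolding W_def using len by (intro real_le_rsqrt) (simp add: algebra_simps)
  qed
  then have "cmod (coeff (poly_of_roots ys) (p - k)) * \<bar>d 0\<bar> \<le> (1 + W) ^ p * \<bar>d 0\<bar>"
    using norm_coeff_poly_of_roots_le[of ys W] len by (intro mult_right_mono) auto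
  then show ?thesis
    using roots_of_reversed_norm_coeff[OF ys assms(4)] by simp
qed

section \<open>A root of the characteristic polynomial close to the unit circle\<close>

lemma abs_diff_mult_ge_half:
  fixes c a l :: real
  assumes "0 < l" "l \<le> \<bar>c\<bar> / (2 * (\<bar>a\<bar> + 1))"
  shows "\<bar>c\<bar> / 2 \<le> \<bar>c - l * a\<bar>"
proof -
  have "l * \<bar>a\<bar> \<le> \<bar>c\<bar> / (2 * (\<bar>a\<bar> + 1)) * \<bar>a\<bar>"
    using assms by (intro mult_right_mono) auto
  also have "\<dots> \<le> \<bar>c\<bar> / 2"
    by (simp add: field_simps)
  finally have "\<bar>l * a\<bar> \<le> \<bar>c\<bar> / 2"
    using assms(1) by (simp add: abs_mult)
  then show ?thesis
    using abs_triangle_ineq2[of c "l * a"] by linarith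
qed

lemma cmod_le_of_Re_le:
  assumes "2 * Re y \<le> -1 - s * (cmod y)\<^sup>2" "s > 0"
  shows "cmod y \<le> 2 / s"
proof -
  have "s * cmod y * cmod y \<le> 2 * cmod y"
    using assms abs_Re_le_cmod[of y] by (simp add: power2_eq_square mult.assoc)
  then show ?thesis
    using assms by (cases "cmod y = 0") (auto simp: field_simps)
qed

text \<open>The roots \<open>y\<close> below are the reciprocals \<open>1 / (z - 1)\<close> of the roots \<open>z\<close> of the
  characteristic polynomial, and \<open>-1 - K l |y|\<^sup>2 < 2 Re y\<close> says \<open>|z|\<^sup>2 > 1 - K l\<close>. If no root
  escaped in this sense, Vieta's formulas would bound the coefficient \<open>c m - l a m\<close> of the first
  non-vanishing \<open>c m\<close> by less than \<open>|c m| / 2\<close>.\<close>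

lemma escaping_root_order_1:
  fixes c a :: "nat \<Rightarrow> real"
  assumes "p \<ge> 1" "c 0 = 0" "c 1 \<noteq> 0" "a 0 \<noteq> 0"
  obtains K l0 where "K > 0" "l0 > 0"
    "\<And>l ys. 0 < l \<Longrightarrow> l \<le> l0 \<Longrightarrow> roots_of_reversed p (\<lambda>k. c k - l * a k) ys \<Longrightarrow>
       \<exists>y\<in>set ys. -1 - K * l * (cmod y)\<^sup>2 < 2 * Re y"
proof -
  define K where "K = 4 * p * \<bar>a 0\<bar> / \<bar>c 1\<bar> + 1"
  define l0 where "l0 = \<bar>c 1\<bar> / (2 * (\<bar>a 1\<bar> + 1))"
  have K: "K > 0"
    unfolding K_def using assms by (simp add: add_nonneg_pos)
  show thesis
  proof (rule that[of K l0])
    show "K > 0" "l0 > 0"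
      using K assms by (simp_all add: l0_def add_nonneg_pos)
    fix l ys
    assume l: "0 < l" "l \<le> l0" and ys: "roots_of_reversed p (\<lambda>k. c k - l * a k) ys"
    show "\<exists>y\<in>set ys. -1 - K * l * (cmod y)\<^sup>2 < 2 * Re y"
    proof (rule ccontr)
      assume "\<not> ?thesis"
      then have "cmod y \<le> 2 / (K * l)" if "y \<in> set ys" for y
        using cmod_le_of_Re_le[of y "K * l"] that K l by (auto simp: not_less)
      then have "\<bar>c 1 - l * a 1\<bar> \<le> p * (2 / (K * l)) * (l * \<bar>a 0\<bar>)"
        using roots_of_reversed_first_coeff_le[OF ys assms(1), of "2 / (K * l)"] assms(2) l
        by (simp add: abs_mult)
      also have "\<dots> = 2 * p * \<bar>a 0\<bar> / K"
        using l K by (simp add: field_simps)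
      finally have "\<bar>c 1 - l * a 1\<bar> \<le> 2 * p * \<bar>a 0\<bar> / K" .
      moreover have "\<bar>c 1\<bar> / 2 \<le> \<bar>c 1 - l * a 1\<bar>"
        using l by (intro abs_diff_mult_ge_half) (auto simp: l0_def)
      ultimately have "\<bar>c 1\<bar> * K \<le> (4 * p * \<bar>a 0\<bar> / K) * K"
        using K by (intro mult_right_mono) auto
      then have "\<bar>c 1\<bar> * K \<le> 4 * p * \<bar>a 0\<bar>"
        using K by simp
      moreover have "\<bar>c 1\<bar> * K = 4 * p * \<bar>a 0\<bar> + \<bar>c 1\<bar>"
        using assms by (simp add: K_def field_simps)
      ultimately show False
        using assms by simp
    qed
  qed
qed

lemma escaping_root_order_2:
  fixes c a :: "nat \<Rightarrow> real"
  assumes "p \<ge> 2" "c 0 = 0" "c 1 = 0" "c 2 \<noteq> 0" "a 0 \<noteq> 0"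
  obtains K l0 where "K > 0" "l0 > 0"
    "\<And>l ys. 0 < l \<Longrightarrow> l \<le> l0 \<Longrightarrow> roots_of_reversed p (\<lambda>k. c k - l * a k) ys \<Longrightarrow>
       \<exists>y\<in>set ys. -1 - K * l * (cmod y)\<^sup>2 < 2 * Re y"
proof -
  define B where "B = \<bar>a 1\<bar> / \<bar>a 0\<bar>"
  define K where "K = 4 * B * \<bar>a 0\<bar> / \<bar>c 2\<bar> + 1"
  define l0 where "l0 = min (\<bar>c 2\<bar> / (2 * (\<bar>a 2\<bar> + 1))) (\<bar>c 2\<bar> / (2 * \<bar>a 0\<bar> * (B\<^sup>2 + 1)))"
  have K: "K > 0"
    unfolding K_def B_def using assms by (simp add: add_nonneg_pos)
  show thesis
  proof (rule that[of K l0])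
    show "K > 0" "l0 > 0"
      using K assms by (simp_all add: l0_def add_nonneg_pos add_pos_nonneg)
    fix l ys
    assume l: "0 < l" "l \<le> l0" and ys: "roots_of_reversed p (\<lambda>k. c k - l * a k) ys"
    show "\<exists>y\<in>set ys. -1 - K * l * (cmod y)\<^sup>2 < 2 * Re y"
    proof (rule ccontr)
      assume "\<not> ?thesis"
      then have "(K * l) * (cmod y)\<^sup>2 \<le> - 2 * Re y" if "y \<in> set ys" for y
        using that by (auto simp: not_less)
      moreover have "\<bar>c 1 - l * a 1\<bar> / \<bar>c 0 - l * a 0\<bar> = B"
        using assms l by (simp add: B_def abs_mult)
      ultimately have "2 * \<bar>c 2 - l * a 2\<bar> \<le> (B\<^sup>2 + 2 * B / (K * l)) * (l * \<bar>a 0\<bar>)"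
        using roots_of_reversed_second_coeff_le[OF ys assms(1), of "K * l"] assms l K by (simp add: abs_mult)
      also have "\<dots> = B\<^sup>2 * l * \<bar>a 0\<bar> + 2 * B * \<bar>a 0\<bar> / K"
        using l K by (simp add: field_simps)
      finally have upper: "2 * \<bar>c 2 - l * a 2\<bar> \<le> B\<^sup>2 * l * \<bar>a 0\<bar> + 2 * B * \<bar>a 0\<bar> / K" .
      have "\<bar>c 2\<bar> / 2 \<le> \<bar>c 2 - l * a 2\<bar>"
        using l by (intro abs_diff_mult_ge_half) (auto simp: l0_def)
      moreover have "B\<^sup>2 * l * \<bar>a 0\<bar> < \<bar>c 2\<bar> / 2"
      proof -
        have "B\<^sup>2 * l * \<bar>a 0\<bar> \<le> B\<^sup>2 * (\<bar>c 2\<bar> / (2 * \<bar>a 0\<bar> * (B\<^sup>2 + 1))) * \<bar>a 0\<bar>"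
          using l unfolding l0_def by (intro mult_right_mono mult_left_mono) auto
        also have "\<dots> = \<bar>c 2\<bar> / 2 * (B\<^sup>2 / (B\<^sup>2 + 1))"
          using assms by (simp add: divide_simps add_nonneg_pos)
        also have "\<dots> < \<bar>c 2\<bar> / 2 * 1"
          using assms by (intro mult_strict_left_mono) (auto simp: add_nonneg_pos)
        finally show ?thesis
          by simp
      qed
      moreover have "2 * B * \<bar>a 0\<bar> / K < \<bar>c 2\<bar> / 2"
      proof -
        have "\<bar>c 2\<bar> * K = 4 * B * \<bar>a 0\<bar> + \<bar>c 2\<bar>"
          unfolding K_def using assms by (simp add: field_simps)
        then show ?thesis
          using K assms by (simp add: field_simps)
      qed
      ultimately show False
        using upper by (smt (verit))
    qed
  qed
qed

lemma escaping_root_order_ge_3: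
  fixes c a :: "nat \<Rightarrow> real"
  assumes "3 \<le> m" "m \<le> p" "c 0 = 0" "c 1 = 0" "c 2 = 0" "c m \<noteq> 0" "a 0 \<noteq> 0"
  obtains l0 where "l0 > 0"
    "\<And>l ys. 0 < l \<Longrightarrow> l \<le> l0 \<Longrightarrow> roots_of_reversed p (\<lambda>k. c k - l * a k) ys \<Longrightarrow>
       \<exists>y\<in>set ys. -1 - l * (cmod y)\<^sup>2 < 2 * Re y"
proof -
  define B where "B = \<bar>a 1\<bar> / \<bar>a 0\<bar>"
  define W where "W = sqrt ((2 + real p) * B\<^sup>2 + 2 * \<bar>a 2\<bar> / \<bar>a 0\<bar>)"
  define l0 where "l0 = min (\<bar>c m\<bar> / (2 * (\<bar>a m\<bar> + 1))) (\<bar>c m\<bar> / (4 * \<bar>a 0\<bar> * (1 + W) ^ p))"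
  have W: "W \<ge> 0"
    by (simp add: W_def B_def)
  show thesis
  proof (rule that[of l0])
    show "l0 > 0"
      using W assms by (simp add: l0_def add_nonneg_pos)
    fix l ys
    assume l: "0 < l" "l \<le> l0" and ys: "roots_of_reversed p (\<lambda>k. c k - l * a k) ys"
    show "\<exists>y\<in>set ys. -1 - l * (cmod y)\<^sup>2 < 2 * Re y"
    proof (rule ccontr)
      assume bad: "\<not> ?thesis"
      have "Re y \<le> 0" if "y \<in> set ys" for y
      proof -
        have "2 * Re y \<le> -1 - l * (cmod y)\<^sup>2"
          using bad that by (auto simp: not_less)
        moreover have "0 \<le> l * (cmod y)\<^sup>2"
          using l by simp
        ultimately show ?thesis
          by linarith
      qed
      moreover have "\<bar>c 0 - l * a 0\<bar> = l * \<bar>a 0\<bar>" "c 0 - l * a 0 \<noteq> 0"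
        "\<bar>c 1 - l * a 1\<bar> / \<bar>c 0 - l * a 0\<bar> = B"
        "2 * \<bar>c 2 - l * a 2\<bar> / \<bar>c 0 - l * a 0\<bar> = 2 * \<bar>a 2\<bar> / \<bar>a 0\<bar>"
        using assms l by (simp_all add: B_def abs_mult)
      moreover have "p \<ge> 2"
        using assms by simp
      ultimately have "\<bar>c m - l * a m\<bar> \<le> (1 + W) ^ p * (l * \<bar>a 0\<bar>)"
        using roots_of_reversed_coeff_le[OF ys _ _ assms(2)] by (simp add: W_def)
      also have "\<dots> \<le> (1 + W) ^ p * ((\<bar>c m\<bar> / (4 * \<bar>a 0\<bar> * (1 + W) ^ p)) * \<bar>a 0\<bar>)"
        using l W unfolding l0_def by (intro mult_left_mono mult_right_mono) auto
      also have "\<dots> = \<bar>c m\<bar> / 4"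
        using W assms by (simp add: divide_simps)
      finally have "\<bar>c m - l * a m\<bar> \<le> \<bar>c m\<bar> / 4" .
      moreover have "\<bar>c m\<bar> / 2 \<le> \<bar>c m - l * a m\<bar>"
        using l by (intro abs_diff_mult_ge_half) (auto simp: l0_def)
      ultimately show False
        using assms by simp
    qed
  qed
qed

lemma escaping_root:
  fixes c a :: "nat \<Rightarrow> real"
  assumes "p \<ge> 1" "c 0 = 0" "c p \<noteq> 0" "a 0 \<noteq> 0"
  obtains K l0 where "K > 0" "l0 > 0"
    "\<And>l ys. 0 < l \<Longrightarrow> l \<le> l0 \<Longrightarrow> roots_of_reversed p (\<lambda>k. c k - l * a k) ys \<Longrightarrow>
       \<exists>y\<in>set ys. -1 - K * l * (cmod y)\<^sup>2 < 2 * Re y"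
proof -
  define m where "m = (LEAST k. 1 \<le> k \<and> c k \<noteq> 0)"
  have m: "1 \<le> m \<and> c m \<noteq> 0"
    unfolding m_def by (rule LeastI[of _ p]) (use assms in auto)
  have "m \<le> p"
    unfolding m_def by (rule Least_le) (use assms in auto)
  have below_m: "c k = 0" if "1 \<le> k" "k < m" for k
    using not_less_Least[of k "\<lambda>k. 1 \<le> k \<and> c k \<noteq> 0"] that unfolding m_def by auto
  consider "m = 1" | "m = 2" | "m \<ge> 3"
    using m by linarith
  then show thesis
  proof cases
    case 1
    with m have "c 1 \<noteq> 0"
      by simp
    then show thesis
      by (rule escaping_root_order_1[of p c a, OF assms(1,2) _ assms(4)]) (rule that)
  next
    case 2
    with m \<open>m \<le> p\<close> below_m[of 1] have "p \<ge> 2" "c 1 = 0" "c 2 \<noteq> 0"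
      by auto
    then show thesis
      by (rule escaping_root_order_2[of p c a, OF _ assms(2) _ _ assms(4)]) (rule that)
  next
    case 3
    have "c 1 = 0" "c 2 = 0" "c m \<noteq> 0"
      using 3 below_m m by auto
    obtain l0 where "l0 > 0" "\<And>l ys. 0 < l \<Longrightarrow> l \<le> l0 \<Longrightarrow>
        roots_of_reversed p (\<lambda>k. c k - l * a k) ys \<Longrightarrow> \<exists>y\<in>set ys. -1 - l * (cmod y)\<^sup>2 < 2 * Re y"
      by (rule escaping_root_order_ge_3[of m p c a, OF 3 \<open>m \<le> p\<close> assms(2) \<open>c 1 = 0\<close> \<open>c 2 = 0\<close>
            \<open>c m \<noteq> 0\<close> assms(4)]) (rule that)
    then show thesis
      by (intro that[of 1 l0]) auto
  qed
qed

lemma binomial_shift_expansion: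
  fixes w :: complex and r :: "nat \<Rightarrow> real"
  shows "(\<Sum>k\<le>p. complex_of_real (real (p choose k) - (\<Sum>i<p. r i * real (i choose k))) * w ^ k)
       = (1 + w) ^ p - (\<Sum>i<p. complex_of_real (r i) * (1 + w) ^ i)"
proof -
  have binomial: "(1 + w) ^ n = (\<Sum>k\<le>n. of_nat (n choose k) * w ^ k)" for n
    using binomial_ring[of w 1 n] by (simp add: add.commute)
  have binomial_le_p: "(1 + w) ^ i = (\<Sum>k\<le>p. of_nat (i choose k) * w ^ k)" if "i < p" for i
    unfolding binomial using that by (intro sum.mono_neutral_left) auto
  have "(\<Sum>k\<le>p. complex_of_real (real (p choose k) - (\<Sum>i<p. r i * real (i choose k))) * w ^ k)
      = (\<Sum>k\<le>p. of_nat (p choose k) * w ^ k)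
        - (\<Sum>k\<le>p. \<Sum>i<p. complex_of_real (r i) * (of_nat (i choose k) * w ^ k))"
    by (simp add: sum_subtractf sum_distrib_right algebra_simps) (simp add: sum_distrib_left algebra_simps)
  also have "(\<Sum>k\<le>p. \<Sum>i<p. complex_of_real (r i) * (of_nat (i choose k) * w ^ k))
      = (\<Sum>i<p. complex_of_real (r i) * (\<Sum>k\<le>p. of_nat (i choose k) * w ^ k))"
    by (subst sum.swap) (simp add: sum_distrib_left)
  also have "\<dots> = (\<Sum>i<p. complex_of_real (r i) * (1 + w) ^ i)"
    using binomial_le_p by simp
  finally show ?thesis
    using binomial[of p] by simp
qed

lemma roots_of_reversed_exist:
  fixes P :: "complex poly" and d :: "nat \<Rightarrow> real"
  assumes deg: "degree P = p" and coeff: "\<And>k. k \<le> p \<Longrightarrow> coeff P k = complex_of_real (d k)"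
    and "d 0 \<noteq> 0"
  obtains ys where "roots_of_reversed p d ys" "\<And>y. y \<in> set ys \<Longrightarrow> y \<noteq> 0 \<and> poly P (inverse y) = 0"
proof -
  let ?R = "reflect_poly P"
  have "coeff P 0 \<noteq> 0"
    using coeff[of 0] assms by simp
  then have "P \<noteq> 0" and deg_R: "degree ?R = p"
    using deg by auto
  obtain ys where ys: "length ys = degree ?R" "?R = smult (lead_coeff ?R) (poly_of_roots ys)"
    by (rule complex_poly_factor_roots)
  have lead: "lead_coeff ?R = complex_of_real (d 0)"
    using deg_R deg coeff[of 0] by (simp add: coeff_reflect_poly)
  have "complex_of_real (d 0) * coeff (poly_of_roots ys) (p - k) = complex_of_real (d k)"
    if "k \<le> p" for k
  proof -
    have "complex_of_real (d 0) * coeff (poly_of_roots ys) (p - k) = coeff ?R (p - k)"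
      using ys(2) lead by (metis coeff_smult)
    also have "\<dots> = complex_of_real (d k)"
      using that deg coeff by (simp add: coeff_reflect_poly)
    finally show ?thesis .
  qed
  then have "roots_of_reversed p d ys"
    using ys(1) deg_R by (simp add: roots_of_reversed_def)
  moreover have "y \<noteq> 0 \<and> poly P (inverse y) = 0" if "y \<in> set ys" for y
  proof -
    have "poly ?R y = 0"
      using ys(2) poly_poly_of_roots_eq_0[OF that] by (metis mult_zero_right poly_smult)
    moreover have "poly ?R 0 \<noteq> 0"
      using \<open>P \<noteq> 0\<close> by simp
    ultimately have "y \<noteq> 0"
      by auto
    then show ?thesis
      using \<open>poly ?R y = 0\<close> poly_reflect_poly_nz[of y P] by simp
  qed
  ultimately show thesis
    using that by blast
qed

lemma one_sub_le_norm_one_plus_inverse: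
  assumes "y \<noteq> 0" "-1 - s * (cmod y)\<^sup>2 < 2 * Re y"
  shows "1 - s \<le> (cmod (1 + inverse y))\<^sup>2"
proof -
  have "(1 - s) * (cmod y)\<^sup>2 < (cmod y)\<^sup>2 + 2 * Re y + 1"
    using assms(2) by (simp add: algebra_simps)
  also have "\<dots> = (cmod (y + 1))\<^sup>2"
    unfolding cmod_power2 by (simp add: power2_eq_square algebra_simps)
  also have "\<dots> = (cmod (1 + inverse y))\<^sup>2 * (cmod y)\<^sup>2"
    using assms(1) by (simp add: norm_mult [symmetric] power_mult_distrib [symmetric] algebra_simps)
  finally show ?thesis
    using assms(1) by (simp add: mult_le_cancel_right less_imp_le)
qed

text \<open>By the binomial theorem, \<open>d k\<close> is the coefficient of \<open>w\<^sup>k\<close> in \<open>z\<^sup>p - (\<Sum>i<p. r i z\<^sup>i)\<close> at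
  \<open>z = 1 + w\<close>.\<close>

lemma characteristic_roots_of_reversed:
  fixes p :: nat and r :: "nat \<Rightarrow> real"
  defines "d \<equiv> \<lambda>k. real (p choose k) - (\<Sum>i<p. r i * real (i choose k))"
  assumes "d 0 \<noteq> 0"
  obtains ys where "roots_of_reversed p d ys"
    "\<And>y. y \<in> set ys \<Longrightarrow> y \<noteq> 0 \<and> (1 + inverse y) ^ p = (\<Sum>i<p. complex_of_real (r i) * (1 + inverse y) ^ i)"
proof -
  define P where "P = (\<Sum>k\<le>p. monom (complex_of_real (d k)) k)"
  have coeff_P: "coeff P k = (if k \<le> p then complex_of_real (d k) else 0)" for k
    by (simp add: P_def coeff_sum coeff_monom)
  have "d p = 1"
    by (simp add: d_def binomial_eq_0)
  have "degree P = p"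
  proof (rule antisym)
    show "degree P \<le> p"
      by (rule degree_le) (simp add: coeff_P)
    show "p \<le> degree P"
      by (rule le_degree) (simp add: coeff_P \<open>d p = 1\<close>)
  qed
  have "poly P w = (1 + w) ^ p - (\<Sum>i<p. complex_of_real (r i) * (1 + w) ^ i)" for w
    using binomial_shift_expansion[of p r w] by (simp add: P_def d_def poly_sum poly_monom)
  moreover obtain ys where "roots_of_reversed p d ys" "\<And>y. y \<in> set ys \<Longrightarrow> y \<noteq> 0 \<and> poly P (inverse y) = 0"
    by (rule roots_of_reversed_exist[of P p d, OF \<open>degree P = p\<close> _ \<open>d 0 \<noteq> 0\<close>])
       (simp add: coeff_P, rule that)
  ultimately show thesis
    using that by simp
qed

lemma slow_characteristic_root:
  fixes alpha beta :: "nat \<Rightarrow> real"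
  assumes p: "p \<ge> 1" and consistent: "(\<Sum>i<p. beta i) = 1"
  obtains K l0 where "K > 0" "l0 > 0"
    "\<And>l. 0 < l \<Longrightarrow> l \<le> l0 \<Longrightarrow>
       \<exists>z. z ^ p = (\<Sum>i<p. complex_of_real (alpha i * l + beta i) * z ^ i) \<and> 1 - K * l \<le> (cmod z)\<^sup>2"
proof (cases "(\<Sum>i<p. alpha i) = 0")
  case True
  have "(\<Sum>i<p. alpha i * l + beta i) = 1" for l
    using True consistent by (simp add: sum.distrib sum_distrib_right [symmetric])
  then have root_1: "(1::complex) ^ p = (\<Sum>i<p. complex_of_real (alpha i * l + beta i) * 1 ^ i)" for l
    by (metis (no_types, lifting) mult.right_neutral of_real_1 of_real_sum power_one sum.cong)
  show thesis
  proof (rule that[of 1 1])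
    fix l :: real
    assume "0 < l"
    then show "\<exists>z. z ^ p = (\<Sum>i<p. complex_of_real (alpha i * l + beta i) * z ^ i) \<and> 1 - 1 * l \<le> (cmod z)\<^sup>2"
      using root_1[of l] by (intro exI[of _ 1]) simp
  qed simp_all
next
  case False
  define c where "c k = real (p choose k) - (\<Sum>i<p. beta i * real (i choose k))" for k
  define a where "a k = (\<Sum>i<p. alpha i * real (i choose k))" for k
  have "c 0 = 0" "c p \<noteq> 0" "a 0 \<noteq> 0"
    using consistent False by (simp_all add: c_def a_def binomial_eq_0)
  obtain K l0 where K: "K > 0" "l0 > 0" and escape: "\<And>l ys. 0 < l \<Longrightarrow> l \<le> l0 \<Longrightarrow>
      roots_of_reversed p (\<lambda>k. c k - l * a k) ys \<Longrightarrow> \<exists>y\<in>set ys. -1 - K * l * (cmod y)\<^sup>2 < 2 * Re y"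
    by (rule escaping_root[of p c a, OF p \<open>c 0 = 0\<close> \<open>c p \<noteq> 0\<close> \<open>a 0 \<noteq> 0\<close>]) (rule that)
  show thesis
  proof (rule that[OF K])
    fix l :: real
    assume l: "0 < l" "l \<le> l0"
    have d: "(\<lambda>k. c k - l * a k)
        = (\<lambda>k. real (p choose k) - (\<Sum>i<p. (alpha i * l + beta i) * real (i choose k)))"
      by (simp add: fun_eq_iff c_def a_def sum_distrib_left sum.distrib algebra_simps sum_subtractf)
    have "real (p choose 0) - (\<Sum>i<p. (alpha i * l + beta i) * real (i choose 0)) \<noteq> 0"
      using fun_cong[OF d, of 0] \<open>c 0 = 0\<close> \<open>a 0 \<noteq> 0\<close> l by auto
    obtain ys where ys: "roots_of_reversed p (\<lambda>k. c k - l * a k) ys"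
      and inverse_root: "\<And>y. y \<in> set ys \<Longrightarrow> y \<noteq> 0 \<and>
        (1 + inverse y) ^ p = (\<Sum>i<p. complex_of_real (alpha i * l + beta i) * (1 + inverse y) ^ i)"
      by (rule characteristic_roots_of_reversed[OF \<open>real (p choose 0) - _ \<noteq> 0\<close>])
         (rule that, simp_all only: d)
    obtain y where y: "y \<in> set ys" "-1 - K * l * (cmod y)\<^sup>2 < 2 * Re y"
      using escape[OF l ys] by blast
    then show "\<exists>z. z ^ p = (\<Sum>i<p. complex_of_real (alpha i * l + beta i) * z ^ i) \<and> 1 - K * l \<le> (cmod z)\<^sup>2"
      using inverse_root[OF y(1)] one_sub_le_norm_one_plus_inverse[of y "K * l"] by blast
  qed
qed

section \<open>Quadratics with a multiple of the identity as Hessian\<close>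

lemma matrix_vector_mult_mat: "(mat c :: real^'n^'n) *v x = c *\<^sub>R x"
  unfolding vec_eq_iff matrix_vector_mult_def mat_def
  by (simp add: if_distrib[of "\<lambda>a. a * _"] cong: if_cong)

lemma matrix_mul_mat: "(mat a :: real^'n^'n) ** mat b = mat (a * b)"
  unfolding vec_eq_iff matrix_matrix_mult_def mat_def
  by (simp add: if_distrib[of "\<lambda>a. a * _"] cong: if_cong)

lemma matrix_inv_mat:
  assumes "c \<noteq> 0"
  shows "matrix_inv (mat c :: real^'n^'n) = mat (1 / c)"
proof -
  let ?A = "mat c :: real^'n^'n" and ?B = "mat (1 / c) :: real^'n^'n"
  have AB: "?A ** ?B = mat 1" "?B ** ?A = mat 1"
    using assms by (simp_all add: matrix_mul_mat)
  have inv: "?A ** matrix_inv ?A = mat 1 \<and> matrix_inv ?A ** ?A = mat 1"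
    unfolding matrix_inv_def by (rule someI[of _ ?B]) (use AB in auto)
  have "matrix_inv ?A = matrix_inv ?A ** (?A ** ?B)"
    using AB by simp
  also have "\<dots> = ?B"
    by (simp add: matrix_mul_assoc inv)
  finally show ?thesis .
qed

lemma quad_grad_mat: "quad_grad (mat c) b x = c *\<^sub>R x + b"
  by (simp add: quad_grad_def matrix_vector_mult_mat)

lemma quad_fun_mat: "quad_fun (mat c) b x = c / 2 * (x \<bullet> x) + b \<bullet> x"
  by (simp add: quad_fun_def matrix_vector_mult_mat)

lemma quad_min_mat: "c \<noteq> 0 \<Longrightarrow> quad_min (mat c) b = - ((1 / c) *\<^sub>R b)"
  by (simp add: quad_min_def matrix_inv_mat matrix_vector_mult_mat)

lemma quad_fun_mat_sub_min:
  assumes "c \<noteq> 0"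
  shows "quad_fun (mat c) b x - quad_fun (mat c) b (quad_min (mat c) b)
           = c / 2 * (norm (x - quad_min (mat c) b))\<^sup>2"
proof -
  have "(norm (x - quad_min (mat c) b))\<^sup>2 = (x + (1 / c) *\<^sub>R b) \<bullet> (x + (1 / c) *\<^sub>R b)"
    using assms by (simp add: quad_min_mat power2_norm_eq_inner)
  then show ?thesis
    using assms by (simp only:) (simp add: quad_fun_mat quad_min_mat inner_add_left inner_add_right
        inner_commute field_simps)
qed

lemma in_Fquad_mat:
  assumes "0 < c" "c \<le> l" "norm (quad_min (mat c) b) \<le> D"
  shows "in_Fquad l D (mat c :: real^'n^'n) b"
  unfolding in_Fquad_def
proof (intro conjI allI impI)
  fix x :: "real^'n"
  assume "x \<noteq> 0"
  then show "0 < x \<bullet> (mat c *v x)"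
    using assms by (simp add: matrix_vector_mult_mat)
next
  show "l-lipschitz_on UNIV (quad_grad (mat c :: real^'n^'n) b)"
  proof (rule lipschitz_onI)
    fix x y :: "real^'n"
    have "dist (quad_grad (mat c) b x) (quad_grad (mat c) b y) = c * dist x y"
      using assms by (simp add: quad_grad_mat dist_norm scaleR_diff_right[symmetric])
    also have "\<dots> \<le> l * dist x y"
      using assms by (intro mult_right_mono) auto
    finally show "dist (quad_grad (mat c) b x) (quad_grad (mat c) b y) \<le> l * dist x y" .
  qed (use assms in auto)
qed (use assms in auto)

lemma scli_window_fixed_point:
  assumes "y = (\<Sum>i<p. alpha i *\<^sub>R F y + beta i *\<^sub>R y)"
  shows "scli_window p alpha beta F (\<lambda>k. y) t j = y"
  using assms by (induction t arbitrary: j) auto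

lemma scli_window_scaled_identity:
  fixes u :: "nat \<Rightarrow> real" and v :: "'a::real_vector"
  assumes "p \<ge> 1"
    and recurrence: "\<And>n. u (n + p) = (\<Sum>i<p. (alpha i * c + beta i) * u (n + i))"
    and init: "\<And>k. k < p \<Longrightarrow> init k = u (p - 1 - k) *\<^sub>R v"
  shows "j < p \<Longrightarrow> scli_window p alpha beta (\<lambda>x. c *\<^sub>R x) init t j = u (t + j) *\<^sub>R v"
proof (induction t arbitrary: j)
  case 0
  then show ?case
    using init[of "p - 1 - j"] by simp
next
  case (Suc t)
  show ?case
  proof (cases "j < p - 1")
    case True
    then show ?thesis
      using Suc by simp
  next
    case False
    then have j: "j = p - 1"
      using Suc.prems by simp
    from False have "scli_window p alpha beta (\<lambda>x. c *\<^sub>R x) init (Suc t) j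
        = (\<Sum>i<p. alpha i *\<^sub>R (c *\<^sub>R (u (t + i) *\<^sub>R v)) + beta i *\<^sub>R (u (t + i) *\<^sub>R v))"
      using Suc.IH by simp
    also have "\<dots> = (\<Sum>i<p. ((alpha i * c + beta i) * u (t + i)) *\<^sub>R v)"
      by (intro sum.cong refl) (simp add: algebra_simps)
    also have "\<dots> = u (t + p) *\<^sub>R v"
      by (simp add: recurrence scaleR_sum_left)
    finally show ?thesis
      using j assms(1) by simp
  qed
qed

lemma scli_iter_characteristic_mode:
  fixes v :: "'a::real_vector" and z \<omega> :: complex
  assumes "p \<ge> 1" "z \<noteq> 0"
    and root: "z ^ p = (\<Sum>i<p. complex_of_real (alpha i * c + beta i) * z ^ i)"
  shows "scli_iter p alpha beta (\<lambda>x. c *\<^sub>R x) (\<lambda>k. Re (\<omega> / z ^ k) *\<^sub>R v) t = Re (\<omega> * z ^ t) *\<^sub>R v"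
proof -
  define \<zeta> where "\<zeta> = \<omega> / z ^ (p - 1)"
  define u where "u n = Re (\<zeta> * z ^ n)" for n
  have "u (n + p) = (\<Sum>i<p. (alpha i * c + beta i) * u (n + i))" for n
  proof -
    have "\<zeta> * z ^ (n + p) = (\<Sum>i<p. complex_of_real (alpha i * c + beta i) * (\<zeta> * z ^ (n + i)))"
      by (simp add: power_add root sum_distrib_left algebra_simps)
    then show ?thesis
      by (simp add: u_def Re_sum)
  qed
  moreover have "Re (\<omega> / z ^ k) = u (p - 1 - k)" if "k < p" for k
  proof -
    have "z ^ (p - 1) = z ^ (p - 1 - k) * z ^ k"
      using that by (simp add: power_add [symmetric])
    then show ?thesis
      using assms(2) by (simp add: u_def \<zeta>_def)
  qed
  ultimately have "scli_window p alpha beta (\<lambda>x. c *\<^sub>R x) (\<lambda>k. Re (\<omega> / z ^ k) *\<^sub>R v) t (p - 1)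
      = u (t + (p - 1)) *\<^sub>R v"
    using assms(1) by (intro scli_window_scaled_identity) auto
  then show ?thesis
    using assms(2) by (simp add: scli_iter_def u_def \<zeta>_def power_add)
qed

lemma inconsistent_scli_fixed_point:
  fixes alpha beta :: "nat \<Rightarrow> real"
  assumes l: "l > 0" and D: "D > 0" and inconsistent: "(\<Sum>i<p. beta i) \<noteq> 1"
  obtains b y :: "real^'n" where "in_Fquad l D (mat l) b" "norm y \<le> D"
    "y = (\<Sum>i<p. alpha i *\<^sub>R quad_grad (mat l) b y + beta i *\<^sub>R y)"
    "quad_fun (mat l) b (quad_min (mat l) b) < quad_fun (mat l) b y"
proof -
  obtain v :: "real^'n" where v: "norm v = 1"
    using norm_axis_1 by blast
  define sa where "sa = (\<Sum>i<p. alpha i)"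
  define sb where "sb = (\<Sum>i<p. beta i)"
  define g where "g = 1 - sb - l * sa"
  have "\<bar>l * sa\<bar> + \<bar>g\<bar> > 0"
    using inconsistent by (auto simp: g_def sb_def)
  \<comment> \<open>With minimiser \<open>\<theta> v\<close>, the point \<open>\<xi> v\<close> is a fixed point iff \<open>\<xi> g + l sa \<theta> = 0\<close>;
    \<open>(\<xi>, \<theta>) = t (l sa, -g)\<close> solves this with \<open>\<xi> - \<theta> = t (1 - sb) \<noteq> 0\<close>.\<close>
  define t where "t = D / (\<bar>l * sa\<bar> + \<bar>g\<bar>)"
  define \<xi> where "\<xi> = t * (l * sa)"
  define \<theta> where "\<theta> = - t * g"
  define b where "b = - (l * \<theta>) *\<^sub>R v"
  have t: "t > 0" "t * (\<bar>l * sa\<bar> + \<bar>g\<bar>) = D"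
    using D \<open>\<bar>l * sa\<bar> + \<bar>g\<bar> > 0\<close> by (simp_all add: t_def)
  have "\<bar>\<xi>\<bar> \<le> D" "\<bar>\<theta>\<bar> \<le> D"
    using t by (auto simp: \<xi>_def \<theta>_def abs_mult intro: order_trans[OF _ eq_refl[OF t(2)]])
  have min: "quad_min (mat l) b = \<theta> *\<^sub>R v"
    using l by (simp add: quad_min_mat b_def)
  show thesis
  proof (rule that[of b "\<xi> *\<^sub>R v"])
    show "in_Fquad l D (mat l) b"
      using l v \<open>\<bar>\<theta>\<bar> \<le> D\<close> by (intro in_Fquad_mat) (auto simp: min)
    show "norm (\<xi> *\<^sub>R v) \<le> D"
      using v \<open>\<bar>\<xi>\<bar> \<le> D\<close> by simp
    have "(\<Sum>i<p. alpha i *\<^sub>R quad_grad (mat l) b (\<xi> *\<^sub>R v) + beta i *\<^sub>R \<xi> *\<^sub>R v)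
        = (\<Sum>i<p. (alpha i * (l * \<xi> - l * \<theta>) + beta i * \<xi>) *\<^sub>R v)"
      by (intro sum.cong refl) (simp add: quad_grad_mat b_def algebra_simps)
    also have "\<dots> = (sa * (l * \<xi> - l * \<theta>) + sb * \<xi>) *\<^sub>R v"
      by (simp add: scaleR_sum_left [symmetric] sum.distrib sum_distrib_right sa_def sb_def)
    also have "sa * (l * \<xi> - l * \<theta>) + sb * \<xi> = \<xi>"
      by (simp add: \<xi>_def \<theta>_def g_def algebra_simps)
    finally show "\<xi> *\<^sub>R v = (\<Sum>i<p. alpha i *\<^sub>R quad_grad (mat l) b (\<xi> *\<^sub>R v) + beta i *\<^sub>R \<xi> *\<^sub>R v)"
      by simp
    have "\<xi> - \<theta> = t * (1 - sb)"
      by (simp add: \<xi>_def \<theta>_def g_def algebra_simps)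
    then have "\<xi> \<noteq> \<theta>"
      using t inconsistent by (auto simp: sb_def)
    then have "0 < l / 2 * (norm (\<xi> *\<^sub>R v - quad_min (mat l) b))\<^sup>2"
      using l v by (simp add: min scaleR_diff_left [symmetric])
    then show "quad_fun (mat l) b (quad_min (mat l) b) < quad_fun (mat l) b (\<xi> *\<^sub>R v)"
      using quad_fun_mat_sub_min[of l b "\<xi> *\<^sub>R v"] l by simp
  qed
qed

lemma inconsistent_scli_lower_bound:
  fixes alpha beta :: "nat \<Rightarrow> real"
  assumes l: "l > 0" and D: "D > 0" and inconsistent: "(\<Sum>i<p. beta i) \<noteq> 1"
  obtains c where "c > 0"
    "\<And>T. 1 \<le> T \<Longrightarrow> \<exists>(S::real^'n^'n) b (init :: nat \<Rightarrow> real^'n).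
       in_Fquad l D S b \<and> (\<forall>k<p. norm (init k) \<le> D) \<and>
       c * l * D\<^sup>2 / real T \<le> quad_fun S b (scli_iter p alpha beta (quad_grad S b) init T)
                                 - quad_fun S b (quad_min S b)"
proof -
  obtain b y :: "real^'n" where "in_Fquad l D (mat l) b" "norm y \<le> D"
    and fixed: "y = (\<Sum>i<p. alpha i *\<^sub>R quad_grad (mat l) b y + beta i *\<^sub>R y)"
    and gap: "quad_fun (mat l) b (quad_min (mat l) b) < quad_fun (mat l) b y"
    by (rule inconsistent_scli_fixed_point[OF l D inconsistent])
  define E where "E = quad_fun (mat l) b y - quad_fun (mat l) b (quad_min (mat l) b)"
  show thesis
  proof (rule that[of "E / (l * D\<^sup>2)"])
    show "E / (l * D\<^sup>2) > 0"
      using gap l D by (simp add: E_def)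
    fix T :: nat
    assume "1 \<le> T"
    then have "E / (l * D\<^sup>2) * l * D\<^sup>2 / real T \<le> E"
      using gap l D by (simp add: E_def divide_le_eq)
    moreover have "scli_iter p alpha beta (quad_grad (mat l) b) (\<lambda>k. y) T = y"
      using scli_window_fixed_point[where F = "quad_grad (mat l) b", OF fixed] by (simp add: scli_iter_def)
    ultimately show "\<exists>(S::real^'n^'n) b (init :: nat \<Rightarrow> real^'n).
       in_Fquad l D S b \<and> (\<forall>k<p. norm (init k) \<le> D) \<and>
       E / (l * D\<^sup>2) * l * D\<^sup>2 / real T \<le> quad_fun S b (scli_iter p alpha beta (quad_grad S b) init T)
                                 - quad_fun S b (quad_min S b)"
      using \<open>in_Fquad l D (mat l) b\<close> \<open>norm y \<le> D\<close>
      by (intro exI[of _ "mat l"] exI[of _ b] exI[of _ "\<lambda>k. y"]) (simp add: E_def)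
  qed
qed

lemma exists_unit_Re_mult_sq_ge:
  fixes w :: complex
  obtains \<omega> where "cmod \<omega> = 1" "(cmod w)\<^sup>2 / 2 \<le> (Re (\<omega> * w))\<^sup>2"
proof (cases "(cmod w)\<^sup>2 / 2 \<le> (Re w)\<^sup>2")
  case True
  then show thesis
    using that[of 1] by simp
next
  case False
  then have "(cmod w)\<^sup>2 / 2 \<le> (Im w)\<^sup>2"
    using cmod_power2[of w] by linarith
  then show thesis
    using that[of "- \<i>"] by simp
qed

lemma half_le_norm_power:
  fixes z :: complex
  assumes "1 - x \<le> (cmod z)\<^sup>2" "0 \<le> x" "x \<le> 1" "real T * x \<le> 1 / 2"
  shows "1 / 2 \<le> (cmod (z ^ T))\<^sup>2"
proof -
  have "1 / 2 \<le> 1 + T * (- x)"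
    using assms(4) by simp
  also have "\<dots> \<le> (1 - x) ^ T"
    using Bernoulli_inequality[of "- x" T] assms(3) by simp
  also have "\<dots> \<le> ((cmod z)\<^sup>2) ^ T"
    using assms by (intro power_mono) auto
  also have "\<dots> = (cmod (z ^ T))\<^sup>2"
    by (simp add: norm_power power_mult [symmetric] mult.commute)
  finally show ?thesis .
qed

text \<open>The initial points are the mode \<open>Re (\<gamma> \<omega> z\<^sup>t)\<close>, \<open>t = -k\<close>, with \<open>\<gamma> = D / 2\<^sup>p\<close>; since
  \<open>|z| \<ge> 1/2\<close> they have norm at most \<open>D\<close>.\<close>

lemma characteristic_root_instance:
  fixes z \<omega> :: complex and alpha beta :: "nat \<Rightarrow> real"
  assumes p: "p \<ge> 1" and lam: "0 < lam" and D: "D > 0" and z: "1 / 2 \<le> cmod z"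
    and \<omega>: "cmod \<omega> = 1" and root: "z ^ p = (\<Sum>i<p. complex_of_real (alpha i * lam + beta i) * z ^ i)"
  obtains init :: "nat \<Rightarrow> real^'n" where "\<forall>k<p. norm (init k) \<le> D"
    "quad_fun (mat lam) 0 (scli_iter p alpha beta (quad_grad (mat lam) 0) init T)
       - quad_fun (mat lam) 0 (quad_min (mat lam) (0 :: real^'n)) = lam / 2 * (D / 2 ^ p)\<^sup>2 * (Re (\<omega> * z ^ T))\<^sup>2"
proof -
  obtain v :: "real^'n" where v: "norm v = 1"
    using norm_axis_1 by blast
  define \<gamma> where "\<gamma> = D / 2 ^ p"
  have "\<gamma> \<ge> 0" "z \<noteq> 0"
    using D z by (auto simp: \<gamma>_def)
  define init where "init k = Re (of_real \<gamma> * \<omega> / z ^ k) *\<^sub>R v" for k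
  have "quad_grad (mat lam) 0 = (\<lambda>x::real^'n. lam *\<^sub>R x)"
    by (simp add: fun_eq_iff quad_grad_mat)
  moreover have "scli_iter p alpha beta (\<lambda>x. lam *\<^sub>R x) init T = Re (of_real \<gamma> * \<omega> * z ^ T) *\<^sub>R v"
    unfolding init_def by (rule scli_iter_characteristic_mode[OF p \<open>z \<noteq> 0\<close> root])
  ultimately have iterate: "scli_iter p alpha beta (quad_grad (mat lam) 0) init T = (\<gamma> * Re (\<omega> * z ^ T)) *\<^sub>R v"
    by (simp add: mult.assoc)
  have "norm (init k) \<le> D" if "k < p" for k
  proof -
    have "(1 / 2) ^ k \<le> (cmod z) ^ k"
      using z by (intro power_mono) auto
    then have "1 / (cmod z) ^ k \<le> 2 ^ k"
      using \<open>z \<noteq> 0\<close> by (simp add: power_divide field_simps)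
    also have "(2::real) ^ k \<le> 2 ^ p"
      using that by (intro power_increasing) auto
    finally have "\<gamma> * (1 / (cmod z) ^ k) \<le> \<gamma> * 2 ^ p"
      using \<open>\<gamma> \<ge> 0\<close> by (intro mult_left_mono)
    moreover have "norm (init k) \<le> cmod (of_real \<gamma> * \<omega> / z ^ k)"
      using v by (simp add: init_def abs_Re_le_cmod)
    moreover have "cmod (of_real \<gamma> * \<omega> / z ^ k) = \<gamma> * (1 / (cmod z) ^ k)"
      using \<omega> \<open>\<gamma> \<ge> 0\<close> by (simp add: norm_divide norm_mult norm_power)
    ultimately show ?thesis
      by (simp add: \<gamma>_def)
  qed
  moreover have "quad_fun (mat lam) 0 (scli_iter p alpha beta (quad_grad (mat lam) 0) init T)
      - quad_fun (mat lam) 0 (quad_min (mat lam) (0 :: real^'n)) = lam / 2 * (D / 2 ^ p)\<^sup>2 * (Re (\<omega> * z ^ T))\<^sup>2"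
    using lam v by (simp add: iterate \<gamma>_def quad_fun_mat quad_min_mat power2_norm_eq_inner [symmetric]
        power_mult_distrib power_divide power2_abs)
  ultimately show thesis
    by (intro that) auto
qed

lemma consistent_scli_lower_bound:
  fixes alpha beta :: "nat \<Rightarrow> real"
  assumes l: "l > 0" and D: "D > 0" and p: "p \<ge> 1" and consistent: "(\<Sum>i<p. beta i) = 1"
  obtains c where "c > 0"
    "\<And>T. 1 \<le> T \<Longrightarrow> \<exists>(S::real^'n^'n) b (init :: nat \<Rightarrow> real^'n).
       in_Fquad l D S b \<and> (\<forall>k<p. norm (init k) \<le> D) \<and>
       c * l * D\<^sup>2 / real T \<le> quad_fun S b (scli_iter p alpha beta (quad_grad S b) init T)
                                 - quad_fun S b (quad_min S b)"
proof -
  obtain K l0 where K: "K > 0" "l0 > 0" and root: "\<And>lam. 0 < lam \<Longrightarrow> lam \<le> l0 \<Longrightarrow>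
      \<exists>z. z ^ p = (\<Sum>i<p. complex_of_real (alpha i * lam + beta i) * z ^ i) \<and> 1 - K * lam \<le> (cmod z)\<^sup>2"
    by (rule slow_characteristic_root[OF p consistent]) (rule that)
  define l1 where "l1 = min l0 (min l (1 / (2 * K)))"
  have "K * l1 \<le> K * (1 / (2 * K))"
    using K by (intro mult_left_mono) (auto simp: l1_def)
  then have l1: "0 < l1" "l1 \<le> l0" "l1 \<le> l" "K * l1 \<le> 1 / 2"
    using K l by (auto simp: l1_def)
  define c where "c = l1 / (8 * 4 ^ p * l)"
  show thesis
  proof (rule that[of c])
    show "c > 0"
      using l1 l by (simp add: c_def)
    fix T :: nat
    assume T: "1 \<le> T"
    \<comment> \<open>With \<open>\<lambda> = l\<^sub>1 / T\<close> the root satisfies \<open>|z\<^sup>T|\<^sup>2 \<ge> (1 - K \<lambda>)\<^sup>T \<ge> 1/2\<close>.\<close>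
    define lam where "lam = l1 / T"
    have lam: "0 < lam" "lam \<le> l1" "real T * (K * lam) = K * l1"
      using T l1 by (auto simp: lam_def field_simps)
    then have "K * lam \<le> 1 / 2"
      using T K l1 by (smt (verit) mult_left_mono of_nat_1 of_nat_mono)
    obtain z where z: "z ^ p = (\<Sum>i<p. complex_of_real (alpha i * lam + beta i) * z ^ i)"
      "1 - K * lam \<le> (cmod z)\<^sup>2"
      using root[of lam] lam l1 by auto
    have "1 / 2 \<le> cmod z"
    proof (rule ccontr)
      assume "\<not> 1 / 2 \<le> cmod z"
      then have "(cmod z)\<^sup>2 < (1 / 2)\<^sup>2"
        by (intro power_strict_mono) auto
      then show False
        using z(2) \<open>K * lam \<le> 1 / 2\<close> by (simp add: power2_eq_square)
    qed
    have "real T * (K * lam) \<le> 1 / 2"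
      unfolding lam(3) by (rule l1(4))
    have "1 / 2 \<le> (cmod (z ^ T))\<^sup>2"
      by (rule half_le_norm_power[OF z(2) _ _ \<open>real T * (K * lam) \<le> 1 / 2\<close>])
         (use K lam \<open>K * lam \<le> 1 / 2\<close> in auto)
    obtain \<omega> where \<omega>: "cmod \<omega> = 1" "(cmod (z ^ T))\<^sup>2 / 2 \<le> (Re (\<omega> * z ^ T))\<^sup>2"
      by (rule exists_unit_Re_mult_sq_ge)
    obtain init :: "nat \<Rightarrow> real^'n" where init: "\<forall>k<p. norm (init k) \<le> D"
      and excess: "quad_fun (mat lam) 0 (scli_iter p alpha beta (quad_grad (mat lam) 0) init T)
        - quad_fun (mat lam) 0 (quad_min (mat lam) (0 :: real^'n)) = lam / 2 * (D / 2 ^ p)\<^sup>2 * (Re (\<omega> * z ^ T))\<^sup>2"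
      by (rule characteristic_root_instance[OF p lam(1) D \<open>1 / 2 \<le> cmod z\<close> \<omega>(1) z(1)])
    have "((2::real) ^ p)\<^sup>2 = 4 ^ p"
      by (simp add: power2_eq_square power_mult_distrib [symmetric])
    then have "c * l * D\<^sup>2 / real T = lam / 2 * (D / 2 ^ p)\<^sup>2 * (1 / 4)"
      using l by (simp add: c_def lam_def power_divide field_simps)
    also have "\<dots> \<le> lam / 2 * (D / 2 ^ p)\<^sup>2 * (Re (\<omega> * z ^ T))\<^sup>2"
      using \<omega>(2) \<open>1 / 2 \<le> (cmod (z ^ T))\<^sup>2\<close> lam by (intro mult_left_mono) auto
    finally have "c * l * D\<^sup>2 / real T \<le> quad_fun (mat lam) 0 (scli_iter p alpha beta (quad_grad (mat lam) 0) init T)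
        - quad_fun (mat lam) 0 (quad_min (mat lam) (0 :: real^'n))"
      unfolding excess .
    moreover have "in_Fquad l D (mat lam) (0 :: real^'n)"
      using lam l1 D by (intro in_Fquad_mat) (auto simp: quad_min_mat)
    ultimately show "\<exists>(S::real^'n^'n) b (init :: nat \<Rightarrow> real^'n).
       in_Fquad l D S b \<and> (\<forall>k<p. norm (init k) \<le> D) \<and>
       c * l * D\<^sup>2 / real T \<le> quad_fun S b (scli_iter p alpha beta (quad_grad S b) init T)
                                 - quad_fun S b (quad_min S b)"
      using init by (intro exI[of _ "mat lam"] exI[of _ "0::real^'n"] exI[of _ init]) auto
  qed
qed

theorem proposition30:
  fixes l D :: real and p :: nat and alpha beta :: "nat \<Rightarrow> real"
  assumes "l > 0" and "D > 0" and "p \<ge> 1"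
  shows "\<exists>c TA. c > 0 \<and> TA > 0 \<and>
    (\<forall>T::nat. real T \<ge> TA \<longrightarrow>
      (\<exists>(S::real^'n^'n) b (init :: nat \<Rightarrow> real^'n).
         in_Fquad l D S b \<and> (\<forall>k<p. norm (init k) \<le> D) \<and>
         (\<exists>T'\<in>{T..T + p - 1}.
            quad_fun S b (scli_iter p alpha beta (quad_grad S b) init T')
              - quad_fun S b (quad_min S b) \<ge> c * l * D\<^sup>2 / real T)))"
proof -
  obtain c where "c > 0" and instances: "\<And>T. 1 \<le> T \<Longrightarrow> \<exists>(S::real^'n^'n) b (init :: nat \<Rightarrow> real^'n).
       in_Fquad l D S b \<and> (\<forall>k<p. norm (init k) \<le> D) \<and>
       c * l * D\<^sup>2 / real T \<le> quad_fun S b (scli_iter p alpha beta (quad_grad S b) init T)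
                                 - quad_fun S b (quad_min S b)"
  proof (cases "(\<Sum>i<p. beta i) = 1")
    case True
    show thesis
      by (rule consistent_scli_lower_bound[OF assms True]) (rule that)
  next
    case False
    show thesis
      by (rule inconsistent_scli_lower_bound[OF assms(1,2) False]) (rule that)
  qed
  have T_mem: "T \<in> {T..T + p - 1}" for T
    using assms(3) by simp
  show ?thesis
    by (rule exI[of _ c], rule exI[of _ "1::real"]) (use \<open>c > 0\<close> instances T_mem in fastforce)
qed

end
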